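(* For every $n\ge 0$, a permutation $\pi$ of $\{1,\ldots,n\}$ can be produced as the output of a loosely locked jump queue with input $1,2,\ldots,n$ if and only if $\pi$ avoids the pattern $4231$.
   Context: A permutation $\pi=\pi_1\cdots\pi_n$ contains a pattern $\alpha=\alpha_1\cdots\alpha_k$ (a permutation of $\{1,\ldots,k\}$) if there are indices $i_1<\cdots<i_k$ with $\pi_{i_r}<\pi_{i_s}$ iff $\alpha_r<\alpha_s$; otherwise $\pi$ avoids $\alpha$. Jump queues. The input is $1,2,\ldots,n$, and at each step one may either append the next input element to the rear of the queue, or remove (output) some element of the queue; the sequence of outputs forms a permutation of $1,\ldots,n$ once all elements have been output. The front element of the queue may always be output. Outputting an element other than the front element is called a jump, and an element may jump only if it is not locked. When an element $x$ jumps, every element currently in the queue behind $x$ (closer to the rear) becomes locked; this lock is released at the moment when all elements that were in front of $x$ at the time of the jump have been output. An element is locked as long as at least one lock applying to it is in force. (In particular jumping the rear element locks nothing.) - In a loosely locked jump queue, newly appended elements are initially unlocked. *)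

theory Defs
  imports Main
begin

definition contains_pattern :: "nat list \<Rightarrow> nat list \<Rightarrow> bool" where
  "contains_pattern p a \<longleftrightarrow>
     (\<exists>idx. length idx = length a \<and> sorted_wrt (<) idx \<and> (\<forall>i\<in>set idx. i < length p) \<and>
        (\<forall>r < length a. \<forall>s < length a. (p ! (idx ! r) < p ! (idx ! s) \<longleftrightarrow> a ! r < a ! s)))"

definition avoids :: "nat list \<Rightarrow> nat list \<Rightarrow> bool" where
  "avoids p a \<longleftrightarrow> \<not> contains_pattern p a"

definition is_perm :: "nat \<Rightarrow> nat list \<Rightarrow> bool" where
  "is_perm n p \<longleftrightarrow> distinct p \<and> set p = {1..n}"

text \<open>A lock is a pair (locked elements, elements that were in front of the jumping
  element). It is in force while some of the latter is still in the queue.\<close>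
definition locked :: "nat list \<Rightarrow> (nat set \<times> nat set) list \<Rightarrow> nat \<Rightarrow> bool" where
  "locked q L x \<longleftrightarrow> (\<exists>(A, B) \<in> set L. x \<in> A \<and> B \<inter> set q \<noteq> {})"

text \<open>Reachable configurations of a loosely locked jump queue with input 1..n:
  next input element m, queue q (front first), locks L, output so far.\<close>
inductive ll_jq :: "nat \<Rightarrow> nat \<Rightarrow> nat list \<Rightarrow> (nat set \<times> nat set) list \<Rightarrow> nat list \<Rightarrow> bool"
  for n :: nat where
  init: "ll_jq n 1 [] [] []"
| push: "ll_jq n m q L out \<Longrightarrow> m \<le> n \<Longrightarrow> ll_jq n (Suc m) (q @ [m]) L out"
| pop_front: "ll_jq n m (x # q) L out \<Longrightarrow> ll_jq n m q L (out @ [x])"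
| jump: "ll_jq n m q L out \<Longrightarrow> 0 < i \<Longrightarrow> i < length q \<Longrightarrow> \<not> locked q L (q ! i) \<Longrightarrow>
     ll_jq n m (take i q @ drop (Suc i) q) ((set (drop (Suc i) q), set (take i q)) # L)
       (out @ [q ! i])"

definition ll_jq_output :: "nat \<Rightarrow> nat list \<Rightarrow> bool" where
  "ll_jq_output n p \<longleftrightarrow> (\<exists>L. ll_jq n (Suc n) [] L p)"

end

(*
  Necessity: along every run the queue is increasing, and two facts about the output so far
  persist. If a was output before b < a, every queued c with b < c < a is locked as long as some
  queued y < b remains: b jumped over y, and c was already behind b because it precedes the
  earlier output a in the input. Hence once a, b, c with b < c < a have been output in this
  order, no element below b is left, for it would have been in front of c when c, locked,
  had to leave the queue. So the 1 of a 4231 can never follow its 423.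

  Sufficiency: the greedy strategy pushes input up to the next required element x and outputs
  it, from the front or by a jump. A lock created by the jump of v holds only elements a > v,
  each bounded by some u output before v, and waits for elements b < v. If x were held by such
  a lock, then u, v, x, b would form a 4231 in the target permutation.
*)
theory Submission
  imports Defs "HOL-Library.Sublist"
begin

lemma subseq_singleton_right: "subseq xs [y] \<longleftrightarrow> xs = [] \<or> xs = [y]"
  by (cases xs) auto

lemma subseq_snoc_iff:
  "subseq xs (ys @ [y]) \<longleftrightarrow> subseq xs ys \<or> (\<exists>xs'. xs = xs' @ [y] \<and> subseq xs' ys)"
  by (auto simp: subseq_append_iff subseq_singleton_right)

lemma set_mono_subseq: "subseq xs ys \<Longrightarrow> set xs \<subseteq> set ys"
  by (induction rule: list_emb.induct) auto

lemma subseq_conv_sorted_indices: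
  "subseq xs ys \<longleftrightarrow>
     (\<exists>idx. sorted_wrt (<) idx \<and> (\<forall>i\<in>set idx. i < length ys) \<and> xs = map ((!) ys) idx)"
proof
  assume "subseq xs ys"
  then show "\<exists>idx. sorted_wrt (<) idx \<and> (\<forall>i\<in>set idx. i < length ys) \<and> xs = map ((!) ys) idx"
  proof (induction rule: list_emb.induct)
    case list_emb_Nil
    show ?case by (intro exI[of _ "[]"]) simp
  next
    case (list_emb_Cons xs ys y)
    then obtain idx where "sorted_wrt (<) idx" "\<forall>i\<in>set idx. i < length ys" "xs = map ((!) ys) idx"
      by blast
    then show ?case by (intro exI[of _ "map Suc idx"]) (auto simp: sorted_wrt_map)
  next
    case (list_emb_Cons2 x y xs ys)
    then obtain idx where "sorted_wrt (<) idx" "\<forall>i\<in>set idx. i < length ys" "xs = map ((!) ys) idx"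
      by blast
    with \<open>x = y\<close> show ?case by (intro exI[of _ "0 # map Suc idx"]) (auto simp: sorted_wrt_map)
  qed
next
  assume "\<exists>idx. sorted_wrt (<) idx \<and> (\<forall>i\<in>set idx. i < length ys) \<and> xs = map ((!) ys) idx"
  then obtain idx where idx: "sorted_wrt (<) idx" "\<forall>i\<in>set idx. i < length ys" "xs = map ((!) ys) idx"
    by blast
  then have "subseq idx [0..<length ys]"
    by (intro sorted_subset_imp_subseq) auto
  then have "subseq (map ((!) ys) idx) (map ((!) ys) [0..<length ys])"
    by (rule subseq_map)
  then show "subseq xs ys" using idx(3) by (simp add: map_nth)
qed

lemma contains_pattern_iff_subseq:
  "contains_pattern p a \<longleftrightarrow>
     (\<exists>xs. subseq xs p \<and> length xs = length a \<and>
        (\<forall>r < length a. \<forall>s < length a. xs ! r < xs ! s \<longleftrightarrow> a ! r < a ! s))"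
  unfolding contains_pattern_def subseq_conv_sorted_indices
  by (smt (verit) length_map nth_map)

definition has_4231 :: "nat list \<Rightarrow> bool" where
  "has_4231 xs \<longleftrightarrow> (\<exists>a b c d. subseq [a, b, c, d] xs \<and> d < b \<and> b < c \<and> c < a)"

lemma contains_4231_iff: "contains_pattern p [4, 2, 3, 1] \<longleftrightarrow> has_4231 p"
proof -
  let ?a = "[4, 2, 3, 1] :: nat list"
  have shape: "(length xs = length ?a \<and>
        (\<forall>r < length ?a. \<forall>s < length ?a. xs ! r < xs ! s \<longleftrightarrow> ?a ! r < ?a ! s))
      \<longleftrightarrow> (\<exists>a b c d. xs = [a, b, c, d] \<and> d < b \<and> b < c \<and> c < a)" for xs :: "nat list"
    by (auto simp: numeral_eq_Suc All_less_Suc length_Suc_conv)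
  show ?thesis
    unfolding contains_pattern_iff_subseq has_4231_def shape conj_assoc[symmetric]
    by (metis (no_types, lifting))
qed

lemma sorted_wrt_less_take_drop_nth:
  fixes q :: "'a::linorder list"
  assumes "sorted_wrt (<) q" "i < length q"
  shows "set (take i q) = {y \<in> set q. y < q ! i}" and "set (drop (Suc i) q) = {y \<in> set q. q ! i < y}"
proof -
  define x us vs where "x = q ! i" and "us = take i q" and "vs = drop (Suc i) q"
  have q: "q = us @ x # vs"
    using assms(2) unfolding x_def us_def vs_def by (rule id_take_nth_drop)
  have below: "y < x" if "y \<in> set us" for y
    using assms(1) q that by (simp add: sorted_wrt_append)
  have above: "x < y" if "y \<in> set vs" for y
    using assms(1) q that by (simp add: sorted_wrt_append)
  have "set q = insert x (set us \<union> set vs)"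
    using q by simp
  then have "set us = {y \<in> set q. y < x}" "set vs = {y \<in> set q. x < y}"
    by (auto dest: below above order.asym)
  then show "set (take i q) = {y \<in> set q. y < q ! i}" "set (drop (Suc i) q) = {y \<in> set q. q ! i < y}"
    unfolding x_def us_def vs_def .
qed

lemma distinct_take_drop_nth:
  assumes "distinct q" "i < length q"
  shows "take i q @ drop (Suc i) q = removeAll (q ! i) q"
proof -
  define x us vs where "x = q ! i" and "us = take i q" and "vs = drop (Suc i) q"
  have q: "q = us @ x # vs"
    using assms(2) unfolding x_def us_def vs_def by (rule id_take_nth_drop)
  moreover have "x \<notin> set us" "x \<notin> set vs"
    using assms(1) q by simp_all
  ultimately have "removeAll x q = us @ vs"
    by simp
  then show ?thesis
    unfolding x_def us_def vs_def by (rule sym)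
qed

definition loose_jq_inv :: "nat \<Rightarrow> nat list \<Rightarrow> (nat set \<times> nat set) list \<Rightarrow> nat list \<Rightarrow> bool" where
  "loose_jq_inv m q L out \<longleftrightarrow>
     sorted_wrt (<) q \<and> (\<forall>u \<in> set q \<union> set out. u < m) \<and>
     (\<forall>a b y c. subseq [a, b] out \<longrightarrow> y \<in> set q \<longrightarrow> c \<in> set q \<longrightarrow> y < b \<longrightarrow> b < c \<longrightarrow> c < a \<longrightarrow>
        (\<exists>(A, B)\<in>set L. c \<in> A \<and> y \<in> B)) \<and>
     (\<forall>a b c y. subseq [a, b, c] out \<longrightarrow> b < c \<longrightarrow> c < a \<longrightarrow> y \<in> set q \<longrightarrow> b \<le> y) \<and>
     \<not> has_4231 out"

lemma loose_jq_invD: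
  assumes "loose_jq_inv m q L out"
  shows "sorted_wrt (<) q" and "\<And>u. u \<in> set q \<union> set out \<Longrightarrow> u < m"
    and "\<And>a b y c. \<lbrakk>subseq [a, b] out; y \<in> set q; c \<in> set q; y < b; b < c; c < a\<rbrakk> \<Longrightarrow>
      \<exists>(A, B)\<in>set L. c \<in> A \<and> y \<in> B"
    and "\<And>a b c y. \<lbrakk>subseq [a, b, c] out; b < c; c < a; y \<in> set q\<rbrakk> \<Longrightarrow> b \<le> y"
    and "\<not> has_4231 out"
  using assms unfolding loose_jq_inv_def by blast+

lemma loose_jq_inv_init: "loose_jq_inv 1 [] [] []"
  unfolding loose_jq_inv_def has_4231_def by simp

lemma loose_jq_inv_push:
  assumes inv: "loose_jq_inv m q L out"
  shows "loose_jq_inv (Suc m) (q @ [m]) L out"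
  unfolding loose_jq_inv_def
proof (intro conjI allI impI)
  note D = loose_jq_invD[OF inv]
  have old: "y \<in> set q" if "y \<in> set (q @ [m])" "y < u" "u \<in> set out" for y u
    using that D(2)[of u] by auto
  show "sorted_wrt (<) (q @ [m])"
    using D(1,2) by (simp add: sorted_wrt_append)
  show "\<forall>u\<in>set (q @ [m]) \<union> set out. u < Suc m"
    using D(2) by (auto simp: less_Suc_eq)
  show "\<exists>(A, B)\<in>set L. c \<in> A \<and> y \<in> B"
    if "subseq [a, b] out" "y \<in> set (q @ [m])" "c \<in> set (q @ [m])" "y < b" "b < c" "c < a"
    for a b y c
  proof -
    have "a \<in> set out" "b \<in> set out"
      using set_mono_subseq[OF that(1)] by auto
    then have "y \<in> set q" "c \<in> set q"
      using old[OF that(2,4)] old[OF that(3,6)] by simp_all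
    then show ?thesis
      using D(3)[OF that(1)] that(4-6) by blast
  qed
  show "b \<le> y" if "subseq [a, b, c] out" "b < c" "c < a" "y \<in> set (q @ [m])" for a b c y
    using that D(2)[of b] D(4) set_mono_subseq[OF that(1)] by (cases "y = m") auto
  show "\<not> has_4231 out"
    by (rule D(5))
qed

lemma loose_jq_inv_locked:
  assumes "loose_jq_inv m q L out" "subseq [a, b] out"
    and "y \<in> set q" "c \<in> set q" "y < b" "b < c" "c < a"
  shows "locked q L c"
  using loose_jq_invD(3)[OF assms] assms(3) unfolding locked_def by blast

lemma loose_jq_inv_snoc_avoids:
  assumes inv: "loose_jq_inv m q L out" and x: "x \<in> set q"
  shows "\<not> has_4231 (out @ [x])"
proof
  assume "has_4231 (out @ [x])"
  then obtain a b c d where abcd: "subseq [a, b, c, d] (out @ [x])" "d < b" "b < c" "c < a"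
    unfolding has_4231_def by blast
  show False
  proof (cases "subseq [a, b, c, d] out")
    case True
    then show ?thesis
      using loose_jq_invD(5)[OF inv] abcd(2-4) unfolding has_4231_def by blast
  next
    case False
    then have "d = x" "subseq [a, b, c] out"
      using abcd(1) by (auto simp: subseq_snoc_iff)
    then show ?thesis
      using loose_jq_invD(4)[OF inv _ abcd(3,4) x] abcd(2) by simp
  qed
qed

lemma loose_jq_inv_output_floor:
  assumes inv: "loose_jq_inv m q L out" and x: "x \<in> set q"
    and may_leave: "\<not> locked q L x \<or> (\<forall>y\<in>set q. x \<le> y)"
    and abc: "subseq [a, b, c] (out @ [x])" "b < c" "c < a" and y: "y \<in> set q"
  shows "b \<le> y"
proof (cases "subseq [a, b, c] out")
  case True
  show ?thesis
    using loose_jq_invD(4)[OF inv True abc(2,3) y] .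
next
  case False
  then have "c = x" "subseq [a, b] out"
    using abc(1) by (auto simp: subseq_snoc_iff)
  show ?thesis
  proof (rule ccontr)
    assume "\<not> b \<le> y"
    then have "locked q L x" "y < x"
      using loose_jq_inv_locked[OF inv \<open>subseq [a, b] out\<close> y x] \<open>c = x\<close> abc(2,3) by auto
    then show False
      using may_leave y by auto
  qed
qed

lemma loose_jq_inv_output:
  assumes inv: "loose_jq_inv m q L out" and x: "x \<in> set q" and locks: "set L \<subseteq> set L'"
    and new_locks: "\<And>y c. \<lbrakk>y \<in> set q; c \<in> set q; y < x; x < c\<rbrakk> \<Longrightarrow> \<exists>(A, B)\<in>set L'. c \<in> A \<and> y \<in> B"
    and may_leave: "\<not> locked q L x \<or> (\<forall>y\<in>set q. x \<le> y)"
  shows "loose_jq_inv m (removeAll x q) L' (out @ [x])"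
  unfolding loose_jq_inv_def
proof (intro conjI allI impI)
  note D = loose_jq_invD[OF inv]
  show "sorted_wrt (<) (removeAll x q)"
    using D(1) by (simp add: removeAll_filter_not_eq sorted_wrt_filter)
  show "\<forall>u\<in>set (removeAll x q) \<union> set (out @ [x]). u < m"
    using D(2) x by auto
  show "\<exists>(A, B)\<in>set L'. c \<in> A \<and> y \<in> B"
    if ab: "subseq [a, b] (out @ [x])" and yc: "y \<in> set (removeAll x q)" "c \<in> set (removeAll x q)"
      "y < b" "b < c" "c < a"
    for a b y c
  proof -
    from ab consider "subseq [a, b] out" | "b = x"
      by (auto simp: subseq_snoc_iff)
    then show ?thesis
    proof cases
      case 1
      then show ?thesis
        using D(3)[OF 1 _ _ yc(3-5)] yc(1,2) locks by auto
    next
      case 2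
      then show ?thesis
        using new_locks yc by simp
    qed
  qed
  show "b \<le> y" if "subseq [a, b, c] (out @ [x])" "b < c" "c < a" "y \<in> set (removeAll x q)"
    for a b c y
    using loose_jq_inv_output_floor[OF inv x may_leave that(1-3)] that(4) by simp
  show "\<not> has_4231 (out @ [x])"
    by (rule loose_jq_inv_snoc_avoids[OF inv x])
qed

lemma loose_jq_inv_reachable: "ll_jq n m q L out \<Longrightarrow> loose_jq_inv m q L out"
proof (induction rule: ll_jq.induct)
  case init
  then show ?case by (rule loose_jq_inv_init)
next
  case (push m q L out)
  then show ?case by (simp add: loose_jq_inv_push)
next
  case (pop_front m x q L out)
  have "sorted_wrt (<) (x # q)"
    using pop_front.IH by (rule loose_jq_invD(1))
  then have "loose_jq_inv m (removeAll x (x # q)) L (out @ [x])"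
    by (intro loose_jq_inv_output[OF pop_front.IH]) auto
  moreover have "removeAll x (x # q) = q"
    using \<open>sorted_wrt (<) (x # q)\<close> by auto
  ultimately show ?case
    by simp
next
  case (jump m q L out i)
  have sorted: "sorted_wrt (<) q"
    using jump.IH by (rule loose_jq_invD(1))
  have "take i q @ drop (Suc i) q = removeAll (q ! i) q"
    using sorted jump.hyps(3) by (simp add: distinct_take_drop_nth strict_sorted_iff)
  moreover have "loose_jq_inv m (removeAll (q ! i) q)
      ((set (drop (Suc i) q), set (take i q)) # L) (out @ [q ! i])"
    using sorted_wrt_less_take_drop_nth[OF sorted jump.hyps(3)] jump.hyps(4)
    by (intro loose_jq_inv_output[OF jump.IH nth_mem[OF jump.hyps(3)]]) auto
  ultimately show ?case
    by simp
qed

lemma ll_jq_output_avoids_4231: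
  assumes "ll_jq_output n p"
  shows "\<not> has_4231 p"
proof -
  obtain L where "ll_jq n (Suc n) [] L p"
    using assms unfolding ll_jq_output_def by blast
  then show ?thesis
    by (intro loose_jq_invD(5) loose_jq_inv_reachable)
qed

definition next_input :: "nat list \<Rightarrow> nat" where
  "next_input out = Suc (Max (insert 0 (set out)))"

lemma next_input_Nil: "next_input [] = 1"
  by (simp add: next_input_def)

lemma next_input_snoc: "next_input (out @ [x]) = max (next_input out) (Suc x)"
proof -
  have "Max (insert x (insert 0 (set out))) = max x (Max (insert 0 (set out)))"
    by (rule Max_insert) simp_all
  then show ?thesis
    unfolding next_input_def by (simp add: insert_commute max.commute del: Max_insert)
qed

lemma less_next_input: "u \<in> set out \<Longrightarrow> u < next_input out"
  by (simp add: next_input_def le_imp_less_Suc)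

lemma below_next_input:
  assumes "0 < a" "a < next_input out"
  shows "\<exists>u\<in>set out. a \<le> u"
proof -
  have "Max (insert 0 (set out)) \<in> insert 0 (set out)"
    by (rule Max_in) simp_all
  then show ?thesis
    using assms unfolding next_input_def by (metis insertE less_Suc_eq_le not_le)
qed

lemma next_input_le:
  assumes "set out \<subseteq> {1..n}"
  shows "next_input out \<le> Suc n"
  using assms by (auto simp: next_input_def)

lemma next_input_perm:
  assumes "is_perm n p"
  shows "next_input p = Suc n"
proof -
  have "Max (insert 0 {1..n}) = n"
    by (rule Max_eqI) auto
  then show ?thesis
    using assms unfolding is_perm_def next_input_def by simp
qed

text \<open>The lock \<open>(A, B)\<close> was created by the jump of \<open>v\<close>.\<close>
definition greedy_locks :: "nat list \<Rightarrow> (nat set \<times> nat set) list \<Rightarrow> bool" where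
  "greedy_locks out L \<longleftrightarrow> (\<forall>(A, B)\<in>set L. \<exists>v\<in>set out.
     (\<forall>b\<in>B. b < v) \<and> (\<forall>a\<in>A. v < a \<and> (\<exists>u. subseq [u, v] out \<and> a \<le> u)))"

lemma greedy_locksE:
  assumes "greedy_locks out L" "(A, B) \<in> set L"
  obtains v where "v \<in> set out" "\<forall>b\<in>B. b < v" "\<forall>a\<in>A. v < a \<and> (\<exists>u. subseq [u, v] out \<and> a \<le> u)"
  using bspec[OF assms(1)[unfolded greedy_locks_def] assms(2)] by auto

lemma greedy_locks_append:
  assumes "greedy_locks out L"
  shows "greedy_locks (out @ ys) L"
  unfolding greedy_locks_def
proof (intro ballI, clarify)
  fix A B
  assume "(A, B) \<in> set L"
  with assms obtain v where v: "v \<in> set out" and B: "\<forall>b\<in>B. b < v"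
    and A: "\<forall>a\<in>A. v < a \<and> (\<exists>u. subseq [u, v] out \<and> a \<le> u)"
    by (rule greedy_locksE)
  show "\<exists>v\<in>set (out @ ys). (\<forall>b\<in>B. b < v) \<and>
      (\<forall>a\<in>A. v < a \<and> (\<exists>u. subseq [u, v] (out @ ys) \<and> a \<le> u))"
  proof (intro bexI[of _ v] conjI)
    show "\<forall>a\<in>A. v < a \<and> (\<exists>u. subseq [u, v] (out @ ys) \<and> a \<le> u)"
      using A subseq_rev_drop_many by blast
  qed (use v B in simp_all)
qed

lemma greedy_locks_snoc_jump:
  assumes locks: "greedy_locks out L"
    and above: "\<forall>a\<in>A. x < a \<and> (\<exists>u\<in>set out. a \<le> u)" and below: "\<forall>b\<in>B. b < x"
  shows "greedy_locks (out @ [x]) ((A, B) # L)"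
proof -
  have "\<forall>a\<in>A. x < a \<and> (\<exists>u. subseq [u, x] (out @ [x]) \<and> a \<le> u)"
  proof
    fix a
    assume "a \<in> A"
    then obtain u where "x < a" "u \<in> set out" "a \<le> u"
      using above by blast
    moreover from \<open>u \<in> set out\<close> have "subseq [u, x] (out @ [x])"
      by (simp add: subseq_snoc_iff subseq_singleton_left)
    ultimately show "x < a \<and> (\<exists>u. subseq [u, x] (out @ [x]) \<and> a \<le> u)"
      by blast
  qed
  with below have "\<exists>v\<in>set (out @ [x]). (\<forall>b\<in>B. b < v) \<and>
      (\<forall>a\<in>A. v < a \<and> (\<exists>u. subseq [u, v] (out @ [x]) \<and> a \<le> u))"
    by (intro bexI[of _ x]) simp_all
  with greedy_locks_append[OF locks, of "[x]"] show ?thesis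
    unfolding greedy_locks_def by (simp only: list.set ball_simps) simp
qed

lemma locked_greedy_imp_4231:
  assumes "greedy_locks out L" "locked q L x" "x \<notin> set out" "set q \<subseteq> set (x # rest)"
  shows "has_4231 (out @ x # rest)"
proof -
  obtain A B b where AB: "(A, B) \<in> set L" "x \<in> A" "b \<in> B" "b \<in> set q"
    using assms(2) unfolding locked_def by blast
  obtain v where v: "v \<in> set out" "\<forall>b\<in>B. b < v" "\<forall>a\<in>A. v < a \<and> (\<exists>u. subseq [u, v] out \<and> a \<le> u)"
    using greedy_locksE[OF assms(1) AB(1)] .
  then obtain u where uv: "subseq [u, v] out" "x \<le> u" "v < x" "b < v"
    using AB(2,3) by blast
  have "u \<in> set out"
    using set_mono_subseq[OF uv(1)] by simp
  then have "x < u"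
    using uv(2) assms(3) by (cases "x = u") auto
  have "b \<in> set rest"
    using AB(4) assms(4) uv(3,4) by auto
  then have "subseq [x, b] (x # rest)"
    by (simp add: subseq_singleton_left)
  with uv(1) have "subseq ([u, v] @ [x, b]) (out @ x # rest)"
    by (rule list_emb_append_mono)
  then have "subseq [u, v, x, b] (out @ x # rest)"
    by simp
  then show ?thesis
    unfolding has_4231_def using uv(3,4) \<open>x < u\<close> by blast
qed

lemma ll_jq_push_upto:
  assumes "ll_jq n m q L out" "m \<le> m'" "m' \<le> Suc n"
  shows "ll_jq n m' (q @ [m..<m']) L out"
  using assms(2,3)
proof (induction m' rule: dec_induct)
  case base
  then show ?case using assms(1) by simp
next
  case (step k)
  then have "ll_jq n (Suc k) ((q @ [m..<k]) @ [k]) L out"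
    by (intro ll_jq.push) simp_all
  then show ?case
    using step.hyps(1) by simp
qed

lemma ll_jq_output_unlocked:
  assumes run: "ll_jq n m q L out" and sorted: "sorted_wrt (<) q"
    and x: "x \<in> set q" and unlocked: "\<not> locked q L x"
  shows "\<exists>L'. ll_jq n m (removeAll x q) L' (out @ [x]) \<and>
    (L' = L \<or> L' = ({c \<in> set q. x < c}, {y \<in> set q. y < x}) # L)"
proof -
  obtain i where i: "i < length q" "q ! i = x"
    using x by (auto simp: in_set_conv_nth)
  have "distinct q"
    using sorted by (simp add: strict_sorted_iff)
  then have rest: "take i q @ drop (Suc i) q = removeAll x q"
    using distinct_take_drop_nth[OF _ i(1)] i(2) by simp
  show ?thesis
  proof (cases "i = 0")
    case True
    then obtain q' where q: "q = x # q'"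
      using i by (cases q) auto
    with run have "ll_jq n m q' L (out @ [x])"
      by (simp add: ll_jq.pop_front)
    moreover have "removeAll x q = q'"
      using rest q True by simp
    ultimately show ?thesis
      by auto
  next
    case False
    with run i have "ll_jq n m (take i q @ drop (Suc i) q)
        ((set (drop (Suc i) q), set (take i q)) # L) (out @ [x])"
      using ll_jq.jump unlocked by fastforce
    then show ?thesis
      unfolding rest sorted_wrt_less_take_drop_nth[OF sorted i(1)] i(2) by blast
  qed
qed

lemma ll_jq_push_filter:
  assumes "ll_jq n m (filter P [1..<m]) L out" "0 < m" "m \<le> m'" "m' \<le> Suc n" "\<forall>y\<ge>m. P y"
  shows "ll_jq n m' (filter P [1..<m']) L out"
proof -
  have "[1..<m'] = [1..<m] @ [m..<m']"
    using assms(2,3) upt_add_eq_append[of 1 m "m' - m"] by simp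
  moreover have "filter P [m..<m'] = [m..<m']"
    using assms(5) by (simp add: filter_id_conv)
  ultimately show ?thesis
    using ll_jq_push_upto[OF assms(1,3,4)] by simp
qed

lemma ll_jq_greedy_push:
  assumes run: "ll_jq n (next_input out) (filter (\<lambda>y. y \<notin> set out) [1..<next_input out]) L out"
    and x: "x \<le> n" and out: "set out \<subseteq> {1..n}"
  shows "ll_jq n (next_input (out @ [x])) (filter (\<lambda>y. y \<notin> set out) [1..<next_input (out @ [x])]) L out"
proof -
  have "0 < next_input out"
    by (simp add: next_input_def)
  moreover have "next_input out \<le> next_input (out @ [x])" "next_input (out @ [x]) \<le> Suc n"
    using x next_input_le[OF out] by (simp_all add: next_input_snoc)
  moreover have "\<forall>y\<ge>next_input out. y \<notin> set out"
    by (auto dest: less_next_input)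
  ultimately show ?thesis
    by (rule ll_jq_push_filter[OF run])
qed

lemma greedy_locks_output:
  assumes locks: "greedy_locks out L"
    and L': "L' = L \<or> L' = ({c \<in> set q. x < c}, {y \<in> set q. y < x}) # L"
    and q: "\<forall>c\<in>set q. 0 < c \<and> c < next_input (out @ [x])"
  shows "greedy_locks (out @ [x]) L'"
  using L'
proof
  assume "L' = L"
  then show ?thesis
    using greedy_locks_append[OF locks] by simp
next
  assume jump: "L' = ({c \<in> set q. x < c}, {y \<in> set q. y < x}) # L"
  have "\<exists>u\<in>set out. c \<le> u" if "c \<in> set q" "x < c" for c
    using below_next_input[of c "out @ [x]"] q that by auto
  then show ?thesis
    unfolding jump by (intro greedy_locks_snoc_jump[OF locks]) auto
qed

lemma greedy_next_unlocked:
  assumes locks: "greedy_locks out L" and avoid: "\<not> has_4231 (out @ x # rest)"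
    and set_p: "set (out @ x # rest) = {1..n}" and x: "x \<notin> set out" and m: "m \<le> Suc n"
  shows "\<not> locked (filter (\<lambda>y. y \<notin> set out) [1..<m]) L x"
proof
  let ?q = "filter (\<lambda>y. y \<notin> set out) [1..<m]"
  assume "locked ?q L x"
  moreover have "set ?q \<subseteq> set (x # rest)"
  proof
    fix y
    assume "y \<in> set ?q"
    then have "y \<in> set (out @ x # rest)" "y \<notin> set out"
      using m unfolding set_p by auto
    then show "y \<in> set (x # rest)"
      by simp
  qed
  ultimately have "has_4231 (out @ x # rest)"
    by (rule locked_greedy_imp_4231[OF locks _ x])
  with avoid show False ..
qed

lemma greedy_step:
  assumes perm: "is_perm n p" and avoid: "\<not> has_4231 p" and p: "out @ x # rest = p"
    and locks: "greedy_locks out L"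
    and run: "ll_jq n (next_input out) (filter (\<lambda>y. y \<notin> set out) [1..<next_input out]) L out"
  shows "\<exists>L'. greedy_locks (out @ [x]) L' \<and> ll_jq n (next_input (out @ [x]))
    (filter (\<lambda>y. y \<notin> set (out @ [x])) [1..<next_input (out @ [x])]) L' (out @ [x])"
proof -
  let ?m' = "next_input (out @ [x])"
  let ?q = "filter (\<lambda>y. y \<notin> set out) [1..<?m']"
  have "distinct (out @ x # rest)" and set_p: "set (out @ x # rest) = {1..n}"
    using perm unfolding p is_perm_def by simp_all
  then have x: "x \<in> {1..n}" "x \<notin> set out" and out: "set out \<subseteq> {1..n}"
    by auto
  have run': "ll_jq n ?m' ?q L out"
    using ll_jq_greedy_push[OF run _ out] x(1) by simp
  have "?m' \<le> Suc n"
    using next_input_le[OF out] x(1) by (simp add: next_input_snoc)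
  then have unlocked: "\<not> locked ?q L x"
    using greedy_next_unlocked[OF locks _ set_p x(2)] avoid p by simp
  have "x \<in> set ?q"
    using set_p x by (simp add: next_input_snoc)
  moreover have "sorted_wrt (<) ?q"
    by (simp add: sorted_wrt_filter)
  ultimately obtain L' where run'': "ll_jq n ?m' (removeAll x ?q) L' (out @ [x])"
    and L': "L' = L \<or> L' = ({c \<in> set ?q. x < c}, {y \<in> set ?q. y < x}) # L"
    using ll_jq_output_unlocked[OF run' _ _ unlocked] by blast
  have "greedy_locks (out @ [x]) L'"
    using greedy_locks_output[OF locks L'] by simp
  moreover have "removeAll x ?q = filter (\<lambda>y. y \<notin> set (out @ [x])) [1..<?m']"
    by (auto simp: removeAll_filter_not_eq filter_filter intro!: filter_cong)
  ultimately show ?thesis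
    using run'' by auto
qed

lemma greedy_run:
  assumes perm: "is_perm n p" and avoid: "\<not> has_4231 p"
  shows "out @ rest = p \<Longrightarrow> \<exists>L. greedy_locks out L \<and>
    ll_jq n (next_input out) (filter (\<lambda>y. y \<notin> set out) [1..<next_input out]) L out"
proof (induction out arbitrary: rest rule: rev_induct)
  case Nil
  have "greedy_locks [] []"
    by (simp add: greedy_locks_def)
  then show ?case
    using ll_jq.init by (auto simp: next_input_Nil)
next
  case (snoc x out)
  then have p: "out @ x # rest = p"
    by simp
  with snoc.IH obtain L where "greedy_locks out L"
    and "ll_jq n (next_input out) (filter (\<lambda>y. y \<notin> set out) [1..<next_input out]) L out"
    by blast
  then show ?case
    by (rule greedy_step[OF perm avoid p])
qed

theorem mainTheorem2:
  fixes n :: nat and p :: "nat list"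
  assumes "is_perm n p"
  shows "ll_jq_output n p \<longleftrightarrow> avoids p [4, 2, 3, 1]"
proof
  assume "ll_jq_output n p"
  then show "avoids p [4, 2, 3, 1]"
    unfolding avoids_def contains_4231_iff by (rule ll_jq_output_avoids_4231)
next
  assume "avoids p [4, 2, 3, 1]"
  then obtain L where "ll_jq n (next_input p) (filter (\<lambda>y. y \<notin> set p) [1..<next_input p]) L p"
    using greedy_run[OF assms, of p "[]"] unfolding avoids_def contains_4231_iff by auto
  moreover have "filter (\<lambda>y. y \<notin> set p) [1..<Suc n] = []"
    using assms unfolding is_perm_def by auto
  ultimately show "ll_jq_output n p"
    unfolding ll_jq_output_def next_input_perm[OF assms] by auto
qed

end
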